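(* For $n\ge2$ and all $P,Q\in\Gamma_n$, $D_{TJ}(P\|Q)\le \frac23 D_{Th}(P\|Q)$.
   Context: $\Gamma_n=\{P=(p_1,\dots,p_n): p_i>0,\ \sum p_i=1\}$. $h(P\|Q)=\frac12\sum_{i=1}^n(\sqrt{p_i}-\sqrt{q_i})^2$; $J(P\|Q)=\sum_{i=1}^n(p_i-q_i)\ln\frac{p_i}{q_i}$; $T(P\|Q)=\sum_{i=1}^n\frac{p_i+q_i}{2}\ln\frac{p_i+q_i}{2\sqrt{p_iq_i}}$. $D_{TJ}=T-\frac18J$, $D_{Th}=T-h$. *)

theory Defs
  imports Complex_Main
begin

definition Gamma :: "nat \<Rightarrow> (nat \<Rightarrow> real) set" where
  "Gamma n = {p. (\<forall>i<n. p i > 0) \<and> (\<Sum>i<n. p i) = 1}"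

definition hell :: "nat \<Rightarrow> (nat \<Rightarrow> real) \<Rightarrow> (nat \<Rightarrow> real) \<Rightarrow> real" where
  "hell n p q = (1/2) * (\<Sum>i<n. (sqrt (p i) - sqrt (q i))^2)"

definition Jdiv :: "nat \<Rightarrow> (nat \<Rightarrow> real) \<Rightarrow> (nat \<Rightarrow> real) \<Rightarrow> real" where
  "Jdiv n p q = (\<Sum>i<n. (p i - q i) * ln (p i / q i))"

definition Tdiv :: "nat \<Rightarrow> (nat \<Rightarrow> real) \<Rightarrow> (nat \<Rightarrow> real) \<Rightarrow> real" where
  "Tdiv n p q = (\<Sum>i<n. (p i + q i) / 2 * ln ((p i + q i) / (2 * sqrt (p i * q i))))"

definition D_TJ :: "nat \<Rightarrow> (nat \<Rightarrow> real) \<Rightarrow> (nat \<Rightarrow> real) \<Rightarrow> real" where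
  "D_TJ n p q = Tdiv n p q - (1/8) * Jdiv n p q"

definition D_Th :: "nat \<Rightarrow> (nat \<Rightarrow> real) \<Rightarrow> (nat \<Rightarrow> real) \<Rightarrow> real" where
  "D_Th n p q = Tdiv n p q - hell n p q"

end

theory Submission
  imports Defs
begin

text \<open>
  The claim is equivalent to \<open>8 T + 16 h \<le> 3 J\<close>, which already holds termwise for all
  positive \<open>p, q\<close>.
  With \<open>x = sqrt (p / q)\<close> the termwise difference \<open>3 J - 8 T - 16 h\<close> is
  \<open>q (x\<^sup>2 + 1) gap x\<close>. Dividing by \<open>x\<^sup>2 + 1\<close> makes the derivative factor as
  \<open>4 x gap_slope x / (x\<^sup>2 + 1)\<^sup>2\<close>, and \<open>gap_slope\<close> is increasing (its derivative
  is \<open>(x - 1)\<^sup>4 / x\<^sup>3\<close>) with \<open>gap_slope 1 = 0\<close>. So \<open>gap\<close> is minimal at \<open>gap 1 = 0\<close>.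
\<close>

definition gap_slope :: "real \<Rightarrow> real" where
  "gap_slope x = (x^2 - 1/x^2) / 2 + 6 * ln x - 4 * (x - 1/x)"

definition gap :: "real \<Rightarrow> real" where
  "gap x = (6 * (x^2 - 1) * ln x - 4 * (x^2 + 1) * ln ((x^2 + 1) / (2 * x)) - 8 * (x - 1)^2)
    / (x^2 + 1)"

lemma DERIV_sign_change_imp_minimum:
  fixes f f' :: "real \<Rightarrow> real"
  assumes deriv: "\<And>y. a < y \<Longrightarrow> (f has_real_derivative f' y) (at y)"
    and left: "\<And>y. a < y \<Longrightarrow> y \<le> c \<Longrightarrow> f' y \<le> 0"
    and right: "\<And>y. c \<le> y \<Longrightarrow> 0 \<le> f' y"
    and "a < c" "a < x"
  shows "f c \<le> f x"
proof (cases "c \<le> x")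
  case True
  show ?thesis
  proof (rule DERIV_nonneg_imp_nondecreasing[of c x f, OF True])
    fix y assume "c \<le> y" "y \<le> x"
    with \<open>a < c\<close> show "\<exists>D. (f has_real_derivative D) (at y) \<and> 0 \<le> D"
      by (intro exI[of _ "f' y"] conjI deriv right) auto
  qed
next
  case False
  show ?thesis
  proof (rule DERIV_nonpos_imp_nonincreasing[of x c f])
    show "x \<le> c" using False by simp
  next
    fix y assume "x \<le> y" "y \<le> c"
    with \<open>a < x\<close> show "\<exists>D. (f has_real_derivative D) (at y) \<and> D \<le> 0"
      by (intro exI[of _ "f' y"] conjI deriv left) auto
  qed
qed

lemma has_real_derivative_gap_slope:
  assumes "x > 0"
  shows "(gap_slope has_real_derivative (x - 1)^4 / x^3) (at x)"
  unfolding gap_slope_def using assms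
  by (auto intro!: derivative_eq_intros simp: power2_eq_square)
     (simp add: divide_simps eval_nat_numeral algebra_simps)

lemma gap_slope_mono:
  assumes "0 < x" "x \<le> y"
  shows "gap_slope x \<le> gap_slope y"
proof (rule DERIV_nonneg_imp_nondecreasing[of x y, OF assms(2)])
  fix z assume "x \<le> z" "z \<le> y"
  with assms show "\<exists>D. (gap_slope has_real_derivative D) (at z) \<and> 0 \<le> D"
    by (intro exI[of _ "(z - 1)^4 / z^3"] conjI has_real_derivative_gap_slope) auto
qed

lemma has_real_derivative_gap:
  assumes "x > 0"
  shows "(gap has_real_derivative 4 * x * gap_slope x / (x^2 + 1)^2) (at x)"
proof -
  have "0 < 1 + x * x" using zero_le_square[of x] by linarith
  with assms show ?thesis
    unfolding gap_def
    by (auto intro!: derivative_eq_intros simp: power2_eq_square)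
       (simp add: gap_slope_def divide_simps power2_eq_square, simp add: algebra_simps)
qed

lemma gap_nonneg:
  assumes "0 < x"
  shows "0 \<le> gap x"
proof -
  have slope_1: "gap_slope 1 = 0" by (simp add: gap_slope_def)
  have "gap 1 \<le> gap x"
  proof (rule DERIV_sign_change_imp_minimum[OF has_real_derivative_gap])
    show "4 * y * gap_slope y / (y^2 + 1)^2 \<le> 0" if "0 < y" "y \<le> 1" for y :: real
      using that gap_slope_mono[of y 1] by (simp add: slope_1 divide_le_0_iff mult_nonneg_nonpos)
    show "0 \<le> 4 * y * gap_slope y / (y^2 + 1)^2" if "1 \<le> y" for y :: real
      using that gap_slope_mono[of 1 y] by (simp add: slope_1)
  qed (use assms in auto)
  then show ?thesis by (simp add: gap_def)
qed

lemma Tdiv_hell_Jdiv_term_gap_eq: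
  fixes p q :: real
  assumes pos: "0 < p" "0 < q"
  defines "x \<equiv> sqrt (p / q)"
  shows "3 * (p - q) * ln (p / q) - 4 * (p + q) * ln ((p + q) / (2 * sqrt (p * q)))
      - 8 * (sqrt p - sqrt q)^2 = q * (x^2 + 1) * gap x"
proof -
  have x: "0 < x" using pos by (simp add: x_def)
  have p: "p = x^2 * q" using pos by (simp add: x_def)
  have ln_ratio: "ln (p / q) = 2 * ln x"
    using pos x by (simp add: p ln_realpow)
  have mean_ratio: "(p + q) / (2 * sqrt (p * q)) = (x^2 + 1) / (2 * x)"
    using pos x by (simp add: p real_sqrt_mult field_simps)
  have sqrt_diff: "(sqrt p - sqrt q)^2 = q * (x - 1)^2"
    using pos x by (simp add: p real_sqrt_mult power2_eq_square algebra_simps)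
  have "x^2 + 1 \<noteq> 0" using zero_le_power2[of x] by linarith
  then have "(x^2 + 1) * gap x
      = 6 * (x^2 - 1) * ln x - 4 * (x^2 + 1) * ln ((x^2 + 1) / (2 * x)) - 8 * (x - 1)^2"
    unfolding gap_def by simp
  then have "q * (x^2 + 1) * gap x
      = q * (6 * (x^2 - 1) * ln x - 4 * (x^2 + 1) * ln ((x^2 + 1) / (2 * x)) - 8 * (x - 1)^2)"
    by (simp only: mult.assoc)
  then show ?thesis
    unfolding ln_ratio mean_ratio sqrt_diff unfolding p by (simp add: algebra_simps)
qed

lemma Tdiv_hell_Jdiv_term_ineq:
  fixes p q :: real
  assumes "0 < p" "0 < q"
  shows "4 * (p + q) * ln ((p + q) / (2 * sqrt (p * q))) + 8 * (sqrt p - sqrt q)^2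
      \<le> 3 * (p - q) * ln (p / q)"
proof -
  have "0 \<le> q * ((sqrt (p / q))^2 + 1) * gap (sqrt (p / q))"
    using assms by (intro mult_nonneg_nonneg gap_nonneg) auto
  then show ?thesis
    using Tdiv_hell_Jdiv_term_gap_eq[OF assms] by linarith
qed

lemma Tdiv_hell_Jdiv_ineq:
  assumes "\<And>i. i < n \<Longrightarrow> 0 < P i" "\<And>i. i < n \<Longrightarrow> 0 < Q i"
  shows "8 * Tdiv n P Q + 16 * hell n P Q \<le> 3 * Jdiv n P Q"
proof -
  have T: "8 * Tdiv n P Q = (\<Sum>i<n. 4 * (P i + Q i) * ln ((P i + Q i) / (2 * sqrt (P i * Q i))))"
    unfolding Tdiv_def sum_distrib_left by (rule sum.cong) auto
  have h: "16 * hell n P Q = (\<Sum>i<n. 8 * (sqrt (P i) - sqrt (Q i))^2)"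
    unfolding hell_def sum_distrib_left by simp
  have J: "3 * Jdiv n P Q = (\<Sum>i<n. 3 * (P i - Q i) * ln (P i / Q i))"
    unfolding Jdiv_def sum_distrib_left by (rule sum.cong) auto
  have "(\<Sum>i<n. 4 * (P i + Q i) * ln ((P i + Q i) / (2 * sqrt (P i * Q i)))
                + 8 * (sqrt (P i) - sqrt (Q i))^2)
      \<le> (\<Sum>i<n. 3 * (P i - Q i) * ln (P i / Q i))"
    by (intro sum_mono Tdiv_hell_Jdiv_term_ineq) (simp_all add: assms)
  then show ?thesis
    unfolding T h J sum.distrib .
qed

theorem proposition5p7:
  fixes n :: nat and P Q :: "nat \<Rightarrow> real"
  assumes "n \<ge> 2" and "P \<in> Gamma n" and "Q \<in> Gamma n"
  shows "D_TJ n P Q \<le> (2/3) * D_Th n P Q"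
proof -
  have "8 * Tdiv n P Q + 16 * hell n P Q \<le> 3 * Jdiv n P Q"
    using assms(2,3) by (intro Tdiv_hell_Jdiv_ineq) (auto simp: Gamma_def)
  then show ?thesis unfolding D_TJ_def D_Th_def by simp
qed

end
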